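(* Let $n\geqslant m\geqslant2$. Then $\mathrm{SR}(n+2,m)=\mathrm{SR}(n,m)+\binom{m+2}{2}$. Furthermore, if $n+m$ is even, then $\mathrm{DR}(n+2,m)=\mathrm{DR}(n,m)+\binom{m+2}{2}$.
   Context: Let $p,q$ be distinct primes and $n,m$ positive integers. In $C_{p^nq^m}$ let $C_{p^aq^x}$ be the unique subgroup of order $p^aq^x$, and write $(a,x;b,y)$ for the pair of subgroups $(C_{p^aq^x},C_{p^bq^y})$ with $0\leqslant a\leqslant b\leqslant n$, $0\leqslant x\leqslant y\leqslant m$, $(a,x)\neq(b,y)$. Its midpoint is $(a+x+b+y)/2$, and $R_M$ (depending on $n,m$) is the set of all such pairs with midpoint $M$. The simple rainbow number $\mathrm{SR}(n,m)$ is $|R_{(n+m)/2}|$ if $n+m$ is odd, and $|R_{(n+m-1)/2}|$ (which equals $|R_{(n+m+1)/2}|$) if $n+m$ is even. For $n,m\geqslant2$ with $n+m$ even, the double rainbow number is $\mathrm{DR}(n,m)=|R_{(n+m)/2}|$. *)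

theory Defs
  imports Main
begin

text \<open>A pair of subgroups (C_{p^a q^x}, C_{p^b q^y}) of C_{p^n q^m} is encoded by its
exponent tuple (a,x,b,y).  Subgroups of the cyclic group are in bijection with
their orders, so this encoding is exactly the paper's notation (a,x;b,y).\<close>

definition subgroup_pairs :: "nat \<Rightarrow> nat \<Rightarrow> (nat \<times> nat \<times> nat \<times> nat) set" where
  "subgroup_pairs n m = {(a, x, b, y). a \<le> b \<and> b \<le> n \<and> x \<le> y \<and> y \<le> m \<and> (a, x) \<noteq> (b, y)}"

text \<open>R_M with M given via twice the midpoint, T = 2M (so midpoint M = T/2).\<close>
definition R2 :: "nat \<Rightarrow> nat \<Rightarrow> nat \<Rightarrow> (nat \<times> nat \<times> nat \<times> nat) set" where
  "R2 n m T = {(a, x, b, y) \<in> subgroup_pairs n m. a + x + b + y = T}"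

definition SR :: "nat \<Rightarrow> nat \<Rightarrow> nat" where
  "SR n m = (if odd (n + m) then card (R2 n m (n + m)) else card (R2 n m (n + m - 1)))"

definition DR :: "nat \<Rightarrow> nat \<Rightarrow> nat" where
  "DR n m = card (R2 n m (n + m))"

end

theory Submission
  imports Defs
begin

text \<open>Multiplying both subgroups of a pair by p maps the pairs of C_{p^n q^m} with midpoint M
bijectively onto the pairs of C_{p^(n+2) q^m} with midpoint M + 1 that have a \<noteq> 0 and b \<noteq> n + 2.
The remaining pairs, with a = 0 or b = n + 2, are determined by their q-exponents x \<le> y \<le> m once
the midpoint is fixed, and when the midpoint lies strictly between m and n + 2 every such (x, y)
occurs exactly once; there are (m + 2) choose 2 of them.\<close>

definition p_shift :: "nat \<times> nat \<times> nat \<times> nat \<Rightarrow> nat \<times> nat \<times> nat \<times> nat" where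
  "p_shift = (\<lambda>(a, x, b, y). (Suc a, x, Suc b, y))"

definition R2_boundary :: "nat \<Rightarrow> nat \<Rightarrow> nat \<Rightarrow> (nat \<times> nat \<times> nat \<times> nat) set" where
  "R2_boundary n m T = {(a, x, b, y) \<in> R2 n m T. a = 0 \<or> b = n}"

lemma finite_R2: "finite (R2 n m T)"
proof (rule finite_subset)
  show "R2 n m T \<subseteq> {0..n} \<times> {0..m} \<times> {0..n} \<times> {0..m}"
    by (auto simp: R2_def subgroup_pairs_def)
qed auto

lemma card_ordered_pairs_atMost: "card {(x::nat, y). x \<le> y \<and> y \<le> m} = (m + 2) choose 2"
proof (induction m)
  case 0
  have "{(x::nat, y). x \<le> y \<and> y \<le> 0} = {(0, 0)}" by auto
  then show ?case by (simp add: numeral_2_eq_2)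
next
  case (Suc m)
  have split: "{(x::nat, y). x \<le> y \<and> y \<le> Suc m}
      = {(x, y). x \<le> y \<and> y \<le> m} \<union> (\<lambda>x. (x, Suc m)) ` {0..Suc m}"
    by auto
  have "finite {(x::nat, y). x \<le> y \<and> y \<le> m}"
    by (rule finite_subset[of _ "{0..m} \<times> {0..m}"]) auto
  then have "card {(x::nat, y). x \<le> y \<and> y \<le> Suc m}
      = card {(x::nat, y). x \<le> y \<and> y \<le> m} + card ((\<lambda>x. (x, Suc m)) ` {0..Suc m})"
    unfolding split by (intro card_Un_disjoint) auto
  also have "card ((\<lambda>x. (x, Suc m)) ` {0..Suc m}) = m + 2"
    by (subst card_image) (auto simp: inj_on_def)
  finally show ?case using Suc by (simp add: numeral_2_eq_2)
qed

lemma inj_p_shift: "inj p_shift"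
  by (auto simp: p_shift_def inj_def)

lemma R2_add2_eq_p_shift_Un_boundary:
  "R2 (n + 2) m (T + 2) = p_shift ` R2 n m T \<union> R2_boundary (n + 2) m (T + 2)"
proof (intro equalityI subsetI)
  fix t assume t: "t \<in> R2 (n + 2) m (T + 2)"
  obtain a x b y where t_eq: "t = (a, x, b, y)" by (cases t)
  show "t \<in> p_shift ` R2 n m T \<union> R2_boundary (n + 2) m (T + 2)"
  proof (cases "a = 0 \<or> b = n + 2")
    case True
    then show ?thesis using t t_eq by (auto simp: R2_boundary_def)
  next
    case False
    then have "(a - 1, x, b - 1, y) \<in> R2 n m T" and "t = p_shift (a - 1, x, b - 1, y)"
      using t t_eq by (auto simp: p_shift_def R2_def subgroup_pairs_def)
    then show ?thesis by blast
  qed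
qed (auto simp: p_shift_def R2_boundary_def R2_def subgroup_pairs_def)

lemma p_shift_R2_disjoint_boundary:
  "p_shift ` R2 n m T \<inter> R2_boundary (n + 2) m (T + 2) = {}"
  by (auto simp: p_shift_def R2_boundary_def R2_def subgroup_pairs_def)

text \<open>The inverse of \<open>(a, x, b, y) \<mapsto> (x, y)\<close>: a boundary pair has \<open>a = 0\<close> when \<open>x + y\<close>
is large and \<open>b = n\<close> when it is small (both at once when \<open>x + y = T - n\<close>).  The bounds
\<open>2 m < T\<close> and \<open>T < 2 n\<close> exclude the degenerate pairs \<open>(0, x, 0, x)\<close> and \<open>(n, 0, n, 0)\<close>.\<close>

lemma card_R2_boundary:
  assumes "2 * m < T" and "T < 2 * n"
  shows "card (R2_boundary n m T) = (m + 2) choose 2"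
proof -
  define qpart where "qpart = (\<lambda>(a::nat, x::nat, b::nat, y::nat). (x, y))"
  define lift where "lift = (\<lambda>(x::nat, y::nat).
      if T - n \<le> x + y then (0, x, T - x - y, y) else (T - n - x - y, x, n, y))"
  have "bij_betw qpart (R2_boundary n m T) {(x, y). x \<le> y \<and> y \<le> m}"
  proof (rule bij_betw_byWitness[where f' = lift])
    show "\<forall>t \<in> R2_boundary n m T. lift (qpart t) = t"
      by (auto simp: qpart_def lift_def R2_boundary_def R2_def subgroup_pairs_def)
    show "\<forall>p \<in> {(x, y). x \<le> y \<and> y \<le> m}. qpart (lift p) = p"
      by (auto simp: qpart_def lift_def)
    show "qpart ` R2_boundary n m T \<subseteq> {(x, y). x \<le> y \<and> y \<le> m}"
      by (auto simp: qpart_def R2_boundary_def R2_def subgroup_pairs_def)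
    show "lift ` {(x, y). x \<le> y \<and> y \<le> m} \<subseteq> R2_boundary n m T"
      using assms by (auto simp: lift_def R2_boundary_def R2_def subgroup_pairs_def split: if_splits)
  qed
  then show ?thesis
    by (simp add: bij_betw_same_card card_ordered_pairs_atMost)
qed

lemma card_R2_add2:
  assumes "2 * m \<le> T + 1" and "T \<le> 2 * n + 1"
  shows "card (R2 (n + 2) m (T + 2)) = card (R2 n m T) + ((m + 2) choose 2)"
proof -
  have "card (R2 (n + 2) m (T + 2)) = card (p_shift ` R2 n m T) + card (R2_boundary (n + 2) m (T + 2))"
    unfolding R2_add2_eq_p_shift_Un_boundary
    by (intro card_Un_disjoint finite_imageI p_shift_R2_disjoint_boundary finite_R2
        rev_finite_subset[OF finite_R2]) (auto simp: R2_boundary_def)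
  also have "card (p_shift ` R2 n m T) = card (R2 n m T)"
    using inj_p_shift by (simp add: card_image inj_on_subset)
  also have "card (R2_boundary (n + 2) m (T + 2)) = (m + 2) choose 2"
    using assms by (intro card_R2_boundary) auto
  finally show ?thesis .
qed

theorem lemma7p10:
  fixes n m :: nat
  assumes "n \<ge> m" and "m \<ge> 2"
  shows "SR (n + 2) m = SR n m + ((m + 2) choose 2) \<and>
         (even (n + m) \<longrightarrow> DR (n + 2) m = DR n m + ((m + 2) choose 2))"
proof -
  have middle: "card (R2 (n + 2) m (n + m + 2)) = card (R2 n m (n + m)) + ((m + 2) choose 2)"
    using assms by (intro card_R2_add2) auto
  have below_middle:
    "card (R2 (n + 2) m (n + m - 1 + 2)) = card (R2 n m (n + m - 1)) + ((m + 2) choose 2)"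
    using assms by (intro card_R2_add2) auto
  have "n + 2 + m - 1 = n + m - 1 + 2"
    using assms by simp
  then have "SR (n + 2) m = SR n m + ((m + 2) choose 2)"
    using middle below_middle by (simp add: SR_def add.commute add.left_commute)
  moreover have "DR (n + 2) m = DR n m + ((m + 2) choose 2)"
    using middle by (simp add: DR_def add.commute add.left_commute)
  ultimately show ?thesis by blast
qed

end
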